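(* Let $t\ge 2$ be a real number. Every poset $\mathbf{P}$ that has an interval representation in which every interval has length in $[1,t]$ satisfies $\dim(\mathbf{P})\le 2\lceil\lg\lg t\rceil+4$; that is, $f(C[1,t])\le 2\lceil\lg\lg t\rceil+4$.
   Context: $\lg$ denotes the logarithm of base $2$. An interval representation of a poset $(X,P)$ assigns to each $x\in X$ a closed real interval $[l_x,r_x]$ such that $x<y$ in $P$ iff $r_x<l_y$; the length is $r_x-l_x$. $C[\alpha,\beta]$ is the class of posets having an interval representation with all lengths in $[\alpha,\beta]$, and $f(C[\alpha,\beta])$ is the least upper bound of the dimensions of posets in $C[\alpha,\beta]$. The dimension of a poset is the minimum number of linear extensions whose intersection is the partial order. *)

theory Defs
  imports Complex_Main
begin

definition strict_poset :: "'a set \<Rightarrow> ('a \<Rightarrow> 'a \<Rightarrow> bool) \<Rightarrow> bool" where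
  "strict_poset X P \<longleftrightarrow>
     (\<forall>x\<in>X. \<not> P x x) \<and>
     (\<forall>x\<in>X. \<forall>y\<in>X. \<forall>z\<in>X. P x y \<longrightarrow> P y z \<longrightarrow> P x z)"

definition interval_rep_len ::
  "'a set \<Rightarrow> ('a \<Rightarrow> 'a \<Rightarrow> bool) \<Rightarrow> real \<Rightarrow> real \<Rightarrow> ('a \<Rightarrow> real) \<Rightarrow> ('a \<Rightarrow> real) \<Rightarrow> bool" where
  "interval_rep_len X P \<alpha> \<beta> l r \<longleftrightarrow>
     (\<forall>x\<in>X. l x \<le> r x \<and> \<alpha> \<le> r x - l x \<and> r x - l x \<le> \<beta>) \<and>
     (\<forall>x\<in>X. \<forall>y\<in>X. P x y \<longleftrightarrow> r x < l y)"

definition in_class_C :: "'a set \<Rightarrow> ('a \<Rightarrow> 'a \<Rightarrow> bool) \<Rightarrow> real \<Rightarrow> real \<Rightarrow> bool" where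
  "in_class_C X P \<alpha> \<beta> \<longleftrightarrow> (\<exists>l r. interval_rep_len X P \<alpha> \<beta> l r)"

definition linear_extension :: "'a set \<Rightarrow> ('a \<Rightarrow> 'a \<Rightarrow> bool) \<Rightarrow> ('a \<Rightarrow> 'a \<Rightarrow> bool) \<Rightarrow> bool" where
  "linear_extension X P L \<longleftrightarrow>
     (\<forall>x\<in>X. \<not> L x x) \<and>
     (\<forall>x\<in>X. \<forall>y\<in>X. \<forall>z\<in>X. L x y \<longrightarrow> L y z \<longrightarrow> L x z) \<and>
     (\<forall>x\<in>X. \<forall>y\<in>X. x \<noteq> y \<longrightarrow> L x y \<or> L y x) \<and>
     (\<forall>x\<in>X. \<forall>y\<in>X. P x y \<longrightarrow> L x y)"

definition realizer :: "'a set \<Rightarrow> ('a \<Rightarrow> 'a \<Rightarrow> bool) \<Rightarrow> ('a \<Rightarrow> 'a \<Rightarrow> bool) set \<Rightarrow> bool" where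
  "realizer X P Ls \<longleftrightarrow>
     (\<forall>L\<in>Ls. linear_extension X P L) \<and>
     (\<forall>x\<in>X. \<forall>y\<in>X. P x y \<longleftrightarrow> (\<forall>L\<in>Ls. L x y))"

definition poset_dim :: "'a set \<Rightarrow> ('a \<Rightarrow> 'a \<Rightarrow> bool) \<Rightarrow> nat" where
  "poset_dim X P = (LEAST d. \<exists>Ls. finite Ls \<and> card Ls = d \<and> realizer X P Ls)"

end

theory Submission
  imports Defs
begin

(*
  An interval whose length L lies in [1, t] belongs to a dyadic band i with 2^i <= L <= 2 * 2^i,
  and since t <= 2^(2^k) for k = ceil (lg (lg t)), there are at most 2^k bands, so two distinct
  bands differ in one of k bits.

  The realizer consists of one extension ordering the intervals by their left endpoints rounded
  up to the grid of mesh 2^i of their band, plus, for each class A among the three residues of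
  the grid index mod 3 and the 2k sets "bit b of the band equals v", the extension that places
  the members of A at their left endpoints and all other intervals at their right endpoints.
  An incomparable pair (x, y) is put in the order x < y by the class of x if x starts first,
  and by a class avoiding y if x ends first. Otherwise y is shifted to the left of x; then a
  bit separates them if their bands differ, a residue class does if their grid indices differ
  mod 3, and if neither happens the grid indices are equal, because the left endpoints are at
  most twice the mesh apart, so the rounded order puts x first.
*)

lemma linear_extension_irrefl: "linear_extension X P L \<Longrightarrow> x \<in> X \<Longrightarrow> \<not> L x x"
  unfolding linear_extension_def by blast

lemma linear_extension_asym:
  "linear_extension X P L \<Longrightarrow> x \<in> X \<Longrightarrow> y \<in> X \<Longrightarrow> L x y \<Longrightarrow> \<not> L y x"
  unfolding linear_extension_def by blast

lemma linear_extension_extends: "linear_extension X P L \<Longrightarrow> x \<in> X \<Longrightarrow> y \<in> X \<Longrightarrow> P x y \<Longrightarrow> L x y"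
  unfolding linear_extension_def by blast

lemma realizer_if_reverses_incomparable:
  assumes ext: "\<And>L. L \<in> Ls \<Longrightarrow> linear_extension X P L"
    and "Ls \<noteq> {}"
    and reverses: "\<And>x y. \<lbrakk>x \<in> X; y \<in> X; x \<noteq> y; \<not> P x y; \<not> P y x\<rbrakk> \<Longrightarrow> \<exists>L\<in>Ls. L x y"
  shows "realizer X P Ls"
  unfolding realizer_def
proof (intro conjI ballI iffI)
  fix x y L assume "x \<in> X" "y \<in> X" "P x y" "L \<in> Ls"
  then show "L x y" using linear_extension_extends[OF ext] by blast
next
  fix x y assume x: "x \<in> X" and y: "y \<in> X" and all: "\<forall>L\<in>Ls. L x y"
  obtain L0 where L0: "L0 \<in> Ls" using \<open>Ls \<noteq> {}\<close> by blast
  show "P x y"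
  proof (rule ccontr)
    assume "\<not> P x y"
    then consider "x = y" | "P y x" | "x \<noteq> y" "\<not> P y x"
      by (cases "x = y") auto
    then show False
    proof cases
      case 1
      from all L0 have "L0 x y" by (rule bspec)
      with linear_extension_irrefl[OF ext[OF L0] x] \<open>x = y\<close> show False by simp
    next
      case 2
      from all L0 have "L0 x y" by (rule bspec)
      moreover from \<open>P y x\<close> have "L0 y x" by (rule linear_extension_extends[OF ext[OF L0] y x])
      ultimately show False using linear_extension_asym[OF ext[OF L0] x y] by simp
    next
      case 3
      with reverses x y \<open>\<not> P x y\<close> obtain L where L: "L \<in> Ls" "L y x" by blast
      from all L(1) have "L x y" by (rule bspec)
      with L show False using linear_extension_asym[OF ext[OF L(1)] x y] by simp
    qed
  qed
qed (rule ext)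

lemma poset_dim_le_card:
  assumes "finite Ls" "realizer X P Ls"
  shows "poset_dim X P \<le> card Ls"
  unfolding poset_dim_def by (rule Least_le) (use assms in blast)

definition lex3_less ::
  "('a \<Rightarrow> 'b::linorder) \<Rightarrow> ('a \<Rightarrow> 'c::linorder) \<Rightarrow> ('a \<Rightarrow> 'd::linorder) \<Rightarrow> 'a \<Rightarrow> 'a \<Rightarrow> bool" where
  "lex3_less p s q x y \<longleftrightarrow> p x < p y \<or> (p x = p y \<and> (s x < s y \<or> (s x = s y \<and> q x < q y)))"

lemma lex3_less_linear_extension:
  fixes l r p :: "'a \<Rightarrow> 'b::linorder"
  assumes P_iff: "\<And>x y. x \<in> X \<Longrightarrow> y \<in> X \<Longrightarrow> P x y \<longleftrightarrow> r x < l y"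
    and between: "\<And>z. z \<in> X \<Longrightarrow> l z \<le> p z \<and> p z \<le> r z"
    and "inj_on q X"
  shows "linear_extension X P (lex3_less p s q)"
  unfolding linear_extension_def
proof (intro conjI ballI impI)
  fix x y assume "x \<in> X" "y \<in> X"
  show "lex3_less p s q x y" if "P x y"
  proof -
    have "p x \<le> r x" "r x < l y" "l y \<le> p y"
      using P_iff between \<open>x \<in> X\<close> \<open>y \<in> X\<close> \<open>P x y\<close> by auto
    then show ?thesis unfolding lex3_less_def by (meson le_less_trans less_le_trans)
  qed
  show "x \<noteq> y \<Longrightarrow> lex3_less p s q x y \<or> lex3_less p s q y x"
    using \<open>inj_on q X\<close> \<open>x \<in> X\<close> \<open>y \<in> X\<close> unfolding lex3_less_def inj_on_def by (metis linorder_neqE)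
qed (auto simp: lex3_less_def)

(* Ties are broken by decreasing q, the opposite of lex3_less with key q, so that two copies of
   the same interval occur in both orders. *)
definition endpoint_less ::
  "('a \<Rightarrow> 'b::linordered_ab_group_add) \<Rightarrow> ('a \<Rightarrow> 'b) \<Rightarrow> ('a \<Rightarrow> 'c::linordered_ab_group_add)
    \<Rightarrow> ('a \<Rightarrow> bool) \<Rightarrow> 'a \<Rightarrow> 'a \<Rightarrow> bool" where
  "endpoint_less l r q A =
     lex3_less (\<lambda>z. if A z then l z else r z) (\<lambda>z. if A z then - r z else - l z) (\<lambda>z. - q z)"

lemma endpoint_less_linear_extension:
  assumes "\<And>x y. x \<in> X \<Longrightarrow> y \<in> X \<Longrightarrow> P x y \<longleftrightarrow> r x < l y"
    and "\<And>z. z \<in> X \<Longrightarrow> l z \<le> r z"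
    and "inj_on q X"
  shows "linear_extension X P (endpoint_less l r q A)"
  unfolding endpoint_less_def
proof (rule lex3_less_linear_extension[OF assms(1)])
  show "inj_on (\<lambda>z. - q z) X" using \<open>inj_on q X\<close> by (simp add: inj_on_def)
qed (use assms(2) in auto)

lemma endpoint_less_if_left_first:
  "A x \<Longrightarrow> l y < r y \<Longrightarrow> l x < l y \<or> l x = l y \<and> r y < r x \<Longrightarrow> endpoint_less l r q A x y"
  by (auto simp: endpoint_less_def lex3_less_def)

lemma endpoint_less_if_right_first:
  "\<not> A y \<Longrightarrow> l x < r x \<Longrightarrow> r x < r y \<or> r x = r y \<and> l y < l x \<Longrightarrow> endpoint_less l r q A x y"
  by (auto simp: endpoint_less_def lex3_less_def)

lemma endpoint_less_if_separated:
  "A x \<Longrightarrow> \<not> A y \<Longrightarrow> l x \<le> r y \<Longrightarrow> l y < r x \<Longrightarrow> endpoint_less l r q A x y"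
  by (auto simp: endpoint_less_def lex3_less_def)

lemma endpoint_less_if_same_interval:
  "A x = A y \<Longrightarrow> l x = l y \<Longrightarrow> r x = r y \<Longrightarrow> q y < q x \<Longrightarrow> endpoint_less l r q A x y"
  by (auto simp: endpoint_less_def lex3_less_def)

lemma ex_dyadic_band:
  fixes len :: real
  assumes "1 \<le> len" "len \<le> 2 ^ n" "0 < n"
  shows "\<exists>i<n. 2 ^ i \<le> len \<and> len \<le> 2 * 2 ^ i"
  using assms(2,3)
proof (induction n)
  case (Suc n)
  show ?case
  proof (cases "len \<le> 2 ^ n \<and> 0 < n")
    case True
    with Suc.IH show ?thesis using less_SucI by blast
  next
    case False
    with Suc.prems assms(1) show ?thesis by (cases n) auto
  qed
qed simp

lemma le_two_pow_two_pow_ceiling_log_log: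
  fixes t :: real
  assumes "1 < t"
  shows "t \<le> 2 ^ 2 ^ nat \<lceil>log 2 (log 2 t)\<rceil>"
proof -
  have "log 2 (log 2 t) \<le> real (nat \<lceil>log 2 (log 2 t)\<rceil>)"
    by linarith
  then have "log 2 t \<le> 2 powr real (nat \<lceil>log 2 (log 2 t)\<rceil>)"
    using assms by (simp add: log_le_iff)
  then have "log 2 t \<le> 2 ^ nat \<lceil>log 2 (log 2 t)\<rceil>"
    by (simp add: powr_realpow)
  then have "t \<le> 2 powr (2 ^ nat \<lceil>log 2 (log 2 t)\<rceil>)"
    using assms by (simp add: log_le_iff)
  then show ?thesis
    by (metis powr_realpow zero_less_numeral of_nat_numeral of_nat_power)
qed

lemma ex_bit_neq_if_less_two_pow:
  fixes i j :: nat
  assumes "i < 2 ^ k" "j < 2 ^ k" "i \<noteq> j"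
  shows "\<exists>b<k. bit i b \<noteq> bit j b"
proof (rule ccontr)
  assume "\<not> ?thesis"
  then have "take_bit k i = take_bit k j"
    by (auto simp: bit_eq_iff bit_take_bit_iff)
  with assms show False by (simp add: take_bit_nat_eq_self)
qed

lemma ceiling_divide_between:
  fixes l r w :: real
  assumes "0 < w" "w \<le> r - l"
  shows "l \<le> of_int \<lceil>l / w\<rceil> * w" "of_int \<lceil>l / w\<rceil> * w \<le> r"
proof -
  show "l \<le> of_int \<lceil>l / w\<rceil> * w"
    using assms(1) by (simp flip: pos_divide_le_eq)
  have "of_int \<lceil>l / w\<rceil> < l / w + 1"
    by linarith
  with assms show "of_int \<lceil>l / w\<rceil> * w \<le> r"
    by (simp add: field_simps)
qed

lemma eq_if_mod_3_eq:
  fixes m n :: int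
  assumes "m \<le> n" "n \<le> m + 2" "m mod 3 = n mod 3"
  shows "m = n"
proof -
  obtain c where c: "n - m = 3 * c"
    using assms(3) by (metis mod_eq_dvd_iff dvdE)
  with assms(1,2) have "0 \<le> c" "c < 1" by linarith+
  with c show ?thesis by simp
qed

lemma ceiling_divide_eq_if_mod_3_eq:
  fixes a b w :: real
  assumes "0 < w" "a \<le> b" "b \<le> a + 2 * w" "\<lceil>a / w\<rceil> mod 3 = \<lceil>b / w\<rceil> mod 3"
  shows "\<lceil>a / w\<rceil> = \<lceil>b / w\<rceil>"
proof (rule eq_if_mod_3_eq)
  show "\<lceil>a / w\<rceil> \<le> \<lceil>b / w\<rceil>"
    using assms by (intro ceiling_mono divide_right_mono) auto
  have "b / w \<le> a / w + 2"
    using assms by (simp add: field_simps)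
  then show "\<lceil>b / w\<rceil> \<le> \<lceil>a / w\<rceil> + 2"
    by (metis ceiling_add_numeral ceiling_mono)
qed (rule assms(4))

(* q only serves to break ties between copies of the same interval. *)
locale banded_interval_order =
  fixes X :: "'a set" and P :: "'a \<Rightarrow> 'a \<Rightarrow> bool"
    and l r q :: "'a \<Rightarrow> real" and band :: "'a \<Rightarrow> nat" and k :: nat
  assumes P_iff: "\<And>x y. x \<in> X \<Longrightarrow> y \<in> X \<Longrightarrow> P x y \<longleftrightarrow> r x < l y"
    and band_le_length: "\<And>z. z \<in> X \<Longrightarrow> 2 ^ band z \<le> r z - l z"
    and length_le_band: "\<And>z. z \<in> X \<Longrightarrow> r z - l z \<le> 2 * 2 ^ band z"
    and band_less: "\<And>z. z \<in> X \<Longrightarrow> band z < 2 ^ k"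
    and inj_q: "inj_on q X"
begin

lemma left_less_right: "z \<in> X \<Longrightarrow> l z < r z"
  using band_le_length[of z]
  by (metis diff_gt_0_iff_gt order_less_le_trans zero_less_numeral zero_less_power)

definition grid_index :: "'a \<Rightarrow> int" where
  "grid_index z = \<lceil>l z / 2 ^ band z\<rceil>"

definition grid_less :: "'a \<Rightarrow> 'a \<Rightarrow> bool" where
  "grid_less = lex3_less (\<lambda>z. of_int (grid_index z) * (2::real) ^ band z) (\<lambda>z. - l z) q"

definition class_less :: "int \<Rightarrow> 'a \<Rightarrow> 'a \<Rightarrow> bool" where
  "class_less j = endpoint_less l r q (\<lambda>z. grid_index z mod 3 = j)"

definition bit_less :: "nat \<Rightarrow> bool \<Rightarrow> 'a \<Rightarrow> 'a \<Rightarrow> bool" where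
  "bit_less b v = endpoint_less l r q (\<lambda>z. bit (band z) b = v)"

definition extensions :: "('a \<Rightarrow> 'a \<Rightarrow> bool) set" where
  "extensions = insert grid_less (class_less ` {0, 1, 2} \<union> case_prod bit_less ` ({..<k} \<times> UNIV))"

lemma grid_less_in_extensions: "grid_less \<in> extensions"
  by (simp add: extensions_def)

lemma class_less_in_extensions: "class_less (j mod 3) \<in> extensions"
proof -
  have "0 \<le> j mod 3" "j mod 3 < 3" by simp_all
  then have "j mod 3 \<in> {0, 1, 2}" by auto
  then have "class_less (j mod 3) \<in> class_less ` {0, 1, 2}" by (rule imageI)
  then show ?thesis unfolding extensions_def by (rule insertI2[OF UnI1])
qed

lemma bit_less_in_extensions:
  assumes "b < k"
  shows "bit_less b v \<in> extensions"
proof -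
  have "bit_less b v \<in> case_prod bit_less ` ({..<k} \<times> UNIV)"
    using assms by (intro image_eqI[where x = "(b, v)"]) simp_all
  then show ?thesis unfolding extensions_def by (rule insertI2[OF UnI2])
qed

lemma finite_extensions: "finite extensions"
  by (simp add: extensions_def)

lemma card_extensions: "card extensions \<le> 2 * k + 4"
proof -
  have "card (class_less ` {0, 1, 2}) \<le> 3"
    using card_image_le[of "{0, 1, 2}" class_less] by simp
  moreover have "card (case_prod bit_less ` ({..<k} \<times> UNIV)) \<le> 2 * k"
    using card_image_le[of "{..<k} \<times> UNIV" "case_prod bit_less"] by (simp add: card_cartesian_product)
  moreover have "card extensions
      \<le> Suc (card (class_less ` {0, 1, 2}) + card (case_prod bit_less ` ({..<k} \<times> UNIV)))"
    unfolding extensions_def using card_Un_le by (simp add: card_insert_if le_SucI)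
  ultimately show ?thesis by linarith
qed

lemma linear_extension_extensions:
  assumes "L \<in> extensions"
  shows "linear_extension X P L"
proof -
  have "linear_extension X P grid_less"
    unfolding grid_less_def
  proof (rule lex3_less_linear_extension[OF P_iff _ inj_q])
    fix z assume "z \<in> X"
    then show "l z \<le> of_int (grid_index z) * 2 ^ band z \<and> of_int (grid_index z) * 2 ^ band z \<le> r z"
      using ceiling_divide_between[of "2 ^ band z" "r z" "l z"] band_le_length
      unfolding grid_index_def by simp
  qed
  moreover have "linear_extension X P (endpoint_less l r q A)" for A
    using endpoint_less_linear_extension[OF P_iff _ inj_q] left_less_right by (simp add: less_imp_le)
  ultimately show ?thesis
    using assms unfolding extensions_def class_less_def bit_less_def by auto
qed

lemma extensions_reverse_overlapping:
  assumes x: "x \<in> X" and y: "y \<in> X" and "x \<noteq> y" and "l x \<le> r y" and "l y \<le> r x"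
  shows "\<exists>L\<in>extensions. L x y"
proof -
  consider (left) "l x < l y \<or> l x = l y \<and> r y < r x"
    | (right) "r x < r y \<or> r x = r y \<and> l y < l x"
    | (shifted) "l y \<le> l x" "l x = l y \<Longrightarrow> r x = r y"
    by fastforce
  then show ?thesis
  proof cases
    case left
    then have "class_less (grid_index x mod 3) x y"
      unfolding class_less_def using left_less_right[OF y] by (intro endpoint_less_if_left_first) auto
    with class_less_in_extensions show ?thesis by blast
  next
    case right
    have "grid_index y mod 3 \<noteq> (grid_index y + 1) mod 3" by (simp add: mod_eq_dvd_iff)
    with right have "class_less ((grid_index y + 1) mod 3) x y"
      unfolding class_less_def using left_less_right[OF x] by (intro endpoint_less_if_right_first) auto
    with class_less_in_extensions show ?thesis by blast
  next
    case shifted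
    have "l y < r x" using shifted left_less_right[OF x] by linarith
    show ?thesis
    proof (cases "band x = band y")
      case False
      then obtain b where "b < k" "bit (band x) b \<noteq> bit (band y) b"
        using ex_bit_neq_if_less_two_pow band_less x y by blast
      with \<open>l x \<le> r y\<close> \<open>l y < r x\<close> have "bit_less b (bit (band x) b) x y"
        unfolding bit_less_def by (intro endpoint_less_if_separated) auto
      with bit_less_in_extensions[OF \<open>b < k\<close>] show ?thesis by blast
    next
      case same_band: True
      show ?thesis
      proof (cases "grid_index x mod 3 = grid_index y mod 3")
        case False
        with \<open>l x \<le> r y\<close> \<open>l y < r x\<close> have "class_less (grid_index x mod 3) x y"
          unfolding class_less_def by (intro endpoint_less_if_separated) auto
        with class_less_in_extensions show ?thesis by blast
      next
        case same_class: True
        have "l x \<le> l y + 2 * 2 ^ band y"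
          using \<open>l x \<le> r y\<close> length_le_band[OF y] by linarith
        then have "\<lceil>l y / 2 ^ band y\<rceil> = \<lceil>l x / 2 ^ band y\<rceil>"
          using shifted same_class same_band
          by (intro ceiling_divide_eq_if_mod_3_eq) (simp_all add: grid_index_def)
        then have same_index: "grid_index x = grid_index y"
          using same_band by (simp add: grid_index_def)
        show ?thesis
        proof (cases "l y < l x")
          case True
          then have "grid_less x y"
            using same_index same_band by (simp add: grid_less_def lex3_less_def)
          with grid_less_in_extensions show ?thesis by blast
        next
          case False
          with shifted have "l x = l y" "r x = r y" by simp_all
          have "q x \<noteq> q y" using inj_q x y \<open>x \<noteq> y\<close> by (auto simp: inj_on_def)
          then consider "q x < q y" | "q y < q x" by linarith
          then show ?thesis
          proof cases
            case 1
            then have "grid_less x y"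
              using \<open>l x = l y\<close> same_index same_band by (simp add: grid_less_def lex3_less_def)
            with grid_less_in_extensions show ?thesis by blast
          next
            case 2
            with \<open>l x = l y\<close> \<open>r x = r y\<close> have "class_less (grid_index x mod 3) x y"
              unfolding class_less_def using same_index by (intro endpoint_less_if_same_interval) auto
            with class_less_in_extensions show ?thesis by blast
          qed
        qed
      qed
    qed
  qed
qed

lemma realizer_extensions: "realizer X P extensions"
proof (rule realizer_if_reverses_incomparable)
  show "extensions \<noteq> {}" using grid_less_in_extensions by blast
  fix x y assume "x \<in> X" "y \<in> X" "x \<noteq> y" "\<not> P x y" "\<not> P y x"
  then show "\<exists>L\<in>extensions. L x y"
    using P_iff by (intro extensions_reverse_overlapping) (auto simp: not_less)
qed (rule linear_extension_extensions)

end

theorem theorem7p3: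
  fixes X :: "'a set" and P :: "'a \<Rightarrow> 'a \<Rightarrow> bool" and t :: real
  assumes "t \<ge> 2"
    and "finite X"
    and "strict_poset X P"
    and "in_class_C X P 1 t"
  shows "real (poset_dim X P) \<le> 2 * real_of_int \<lceil>log 2 (log 2 t)\<rceil> + 4"
proof -
  obtain l r where rep: "interval_rep_len X P 1 t l r"
    using assms(4) unfolding in_class_C_def by blast
  define k where "k = nat \<lceil>log 2 (log 2 t)\<rceil>"
  have "t \<le> 2 ^ 2 ^ k"
    unfolding k_def using assms(1) by (intro le_two_pow_two_pow_ceiling_log_log) simp
  then have "\<exists>i<2 ^ k. 2 ^ i \<le> r z - l z \<and> r z - l z \<le> 2 * 2 ^ i" if "z \<in> X" for z
    using rep that unfolding interval_rep_len_def by (intro ex_dyadic_band) auto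
  then obtain band where band:
    "\<forall>z\<in>X. band z < 2 ^ k \<and> 2 ^ band z \<le> r z - l z \<and> r z - l z \<le> 2 * 2 ^ band z"
    using bchoice[of X "\<lambda>z i. i < 2 ^ k \<and> 2 ^ i \<le> r z - l z \<and> r z - l z \<le> 2 * 2 ^ i"] by blast
  obtain n :: "'a \<Rightarrow> nat" where "inj_on n X"
    using finite_imp_inj_to_nat_seg[OF assms(2)] by blast
  then have "inj_on (real \<circ> n) X"
    by (simp add: inj_on_def)
  moreover have "\<And>x y. x \<in> X \<Longrightarrow> y \<in> X \<Longrightarrow> P x y \<longleftrightarrow> r x < l y"
    using rep unfolding interval_rep_len_def by blast
  ultimately interpret banded_interval_order X P l r "real \<circ> n" band k
    using band by unfold_locales simp_all
  have "poset_dim X P \<le> 2 * k + 4"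
    using poset_dim_le_card[OF finite_extensions realizer_extensions] card_extensions by linarith
  then have "real (poset_dim X P) \<le> 2 * real k + 4"
    by linarith
  moreover have "real k = real_of_int \<lceil>log 2 (log 2 t)\<rceil>"
    unfolding k_def using assms(1) by simp
  ultimately show ?thesis
    by simp
qed

end
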